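(* Let $p\ge 5$ be a prime and let $\rho=(a,2t,b)$ be a positive definite binary quadratic form of discriminant $(2t)^2-4ab=-16p$. Suppose that either $\rho$ is primitive and not in the principal genus, or $\rho=4\rho'$ with $\rho'$ primitive. Then $\rho$ is properly represented by a primitive ternary quadratic form $f$ with invariants $\Omega=2p$ and $\Delta=1$, and any two primitive ternary forms with these invariants properly representing $\rho$ are equivalent. Moreover the reciprocal $F$ of $f$ is improperly primitive with discriminant $\det(A_F)/2=p$.
   Context: A ternary quadratic form is $f=a_{11}x^2+a_{22}y^2+a_{33}z^2+2a_{23}yz+2a_{13}xz+2a_{12}xy$ with integer $a_{ij}$ and symmetric matrix $A_f=(a_{ij})$; its discriminant is $\det(A_f)/2$. With $\tau=\gcd(a_{ij})$ and $\sigma=\gcd(a_{11},a_{22},a_{33},2a_{23},2a_{13},2a_{12})$, $f$ is primitive if $\tau=1$, improperly primitive if $\tau=1,\sigma=2$. With $A_{ij}$ the cofactors, $\Omega=\gcd(A_{ij})$ and $\det(A_f)=\Delta\Omega^2$ define the invariants $\Omega,\Delta$; the reciprocal is $F=\frac1\Omega\sum A_{ij}X_iX_j$. Two ternary forms $f,g$ are equivalent if $A_g=UA_fU^t$ for some integer $U$ with $\det U=\pm1$. A binary form with matrix $B$ is properly represented by $f$ if $M^tA_fM=B$ for an integer $3\times2$ matrix $M$ whose $2\times 2$ minors are coprime. The form $(a,2t,b)$ is $ax^2+2txy+by^2$ with matrix $\begin{pmatrix}a&t\\t&b\end{pmatrix}$. The principal genus of discriminant $-16p$ is the genus containing $x^2+4py^2$.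 *)

theory Defs
  imports "HOL-Analysis.Analysis"
begin

(* Ternary forms are represented by their (symmetric, integer) Gram matrix A_f :: int^3^3,
   f = a11 x^2 + a22 y^2 + a33 z^2 + 2 a23 yz + 2 a13 xz + 2 a12 xy. *)

definition symmetric3 :: "int^3^3 \<Rightarrow> bool" where
  "symmetric3 A \<longleftrightarrow> transpose A = A"

definition tern_tau :: "int^3^3 \<Rightarrow> int" where
  "tern_tau A = Gcd {A $ i $ j | i j. True}"

definition tern_sigma :: "int^3^3 \<Rightarrow> int" where
  "tern_sigma A = Gcd ({A $ i $ i | i. True} \<union> {2 * A $ i $ j | i j. i \<noteq> j})"

definition tern_primitive :: "int^3^3 \<Rightarrow> bool" where
  "tern_primitive A \<longleftrightarrow> tern_tau A = 1"

definition tern_improperly_primitive :: "int^3^3 \<Rightarrow> bool" where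
  "tern_improperly_primitive A \<longleftrightarrow> tern_tau A = 1 \<and> tern_sigma A = 2"

(* cofactor matrix of a 3x3 matrix: A_ij = (-1)^(i+j) * (minor deleting row i, column j);
   for 3x3 matrices this equals the cyclic formula below (indices taken mod 3). *)
definition cof3 :: "int^3^3 \<Rightarrow> int^3^3" where
  "cof3 A = (\<chi> i j. A $ (i+1) $ (j+1) * A $ (i+2) $ (j+2) - A $ (i+1) $ (j+2) * A $ (i+2) $ (j+1))"

definition tern_Omega :: "int^3^3 \<Rightarrow> int" where
  "tern_Omega A = Gcd {cof3 A $ i $ j | i j. True}"

definition tern_invariants :: "int^3^3 \<Rightarrow> int \<Rightarrow> int \<Rightarrow> bool" where
  "tern_invariants A Om D \<longleftrightarrow> tern_Omega A = Om \<and> det A = D * Om^2"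

definition reciprocal :: "int^3^3 \<Rightarrow> int^3^3" where
  "reciprocal A = (\<chi> i j. cof3 A $ i $ j div tern_Omega A)"

definition tern_equivalent :: "int^3^3 \<Rightarrow> int^3^3 \<Rightarrow> bool" where
  "tern_equivalent A B \<longleftrightarrow> (\<exists>U::int^3^3. (det U = 1 \<or> det U = -1) \<and> B = U ** A ** transpose U)"

(* matrix of the binary form (a,2t,b) = a x^2 + 2t xy + b y^2 *)
definition bin_mat :: "int \<Rightarrow> int \<Rightarrow> int \<Rightarrow> int^2^2" where
  "bin_mat a t b = vector [vector [a, t], vector [t, b]]"

definition minors32 :: "int^2^3 \<Rightarrow> int set" where
  "minors32 M = {M $ r $ 1 * M $ s $ 2 - M $ r $ 2 * M $ s $ 1 | r s. r \<noteq> s}"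

definition properly_represents :: "int^3^3 \<Rightarrow> int^2^2 \<Rightarrow> bool" where
  "properly_represents A B \<longleftrightarrow>
     (\<exists>M::int^2^3. transpose M ** A ** M = B \<and> Gcd (minors32 M) = 1)"

definition bqf :: "int \<Rightarrow> int \<Rightarrow> int \<Rightarrow> int \<Rightarrow> int \<Rightarrow> int" where
  "bqf a b c x y = a * x^2 + b * x * y + c * y^2"

definition bin_primitive :: "int \<Rightarrow> int \<Rightarrow> int \<Rightarrow> bool" where
  "bin_primitive a b c \<longleftrightarrow> Gcd {a, b, c} = 1"

definition unit_values :: "int \<Rightarrow> int \<Rightarrow> int \<Rightarrow> int \<Rightarrow> int set" where
  "unit_values a b c D = {bqf a b c x y mod \<bar>D\<bar> | x y. coprime (bqf a b c x y) D}"

(* two primitive forms of discriminant D are in the same genus iff they represent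
   the same values in (Z/DZ)^* *)
definition same_genus :: "int \<times> int \<times> int \<Rightarrow> int \<times> int \<times> int \<Rightarrow> bool" where
  "same_genus f g \<longleftrightarrow> (case f of (a, b, c) \<Rightarrow> case g of (a', b', c') \<Rightarrow>
      unit_values a b c (b^2 - 4*a*c) = unit_values a' b' c' (b'^2 - 4*a'*c'))"

definition in_principal_genus :: "int \<Rightarrow> int \<times> int \<times> int \<Rightarrow> bool" where
  "in_principal_genus p f \<longleftrightarrow> same_genus f (1, 0, 4*p)"

end

theory Submission
  imports Defs "HOL-Number_Theory.Number_Theory"
begin

text \<open>Move a proper representation of \<open>\<rho> = (a, 2t, b)\<close> to the first two coordinates by a
  unimodular change of variables: the ternary form becomes \<open>[[a, t, X], [t, b, Y], [X, Y, Z]]\<close>.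
  Divisibility of the cofactors by \<open>\<Omega> = 2p\<close> and shears \<open>x\<^sub>3 \<mapsto> x\<^sub>3 + k\<^sub>1 x\<^sub>1 + k\<^sub>2 x\<^sub>2\<close> pin \<open>(X, Y)\<close>
  down to \<open>(a w\<^sub>1 + t w\<^sub>2, t w\<^sub>1 + b w\<^sub>2)/2\<close> with \<open>w\<^sub>1 \<equiv> b\<close>, \<open>w\<^sub>2 \<equiv> a (mod 2)\<close>, and \<open>det = 4p\<^sup>2\<close> then
  fixes \<open>Z\<close>. So there is at most one class, and the resulting reduced form is integral, with the
  required invariants and an improperly primitive reciprocal, as soon as \<open>a, b \<equiv> 0\<close> or
  \<open>3 (mod 4)\<close>. For primitive \<open>\<rho>\<close> this can only fail through an odd coefficient \<open>\<equiv> 1 (mod 4)\<close>, and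
  then \<open>\<rho>\<close> lies in the principal genus: like \<open>x\<^sup>2 + 4py\<^sup>2\<close>, it represents modulo \<open>16p\<close> exactly the
  units that are \<open>\<equiv> 1 (mod 4)\<close> and quadratic residues modulo \<open>p\<close>, by quadratic reciprocity.\<close>

section \<open>The Legendre symbol\<close>

lemma cong_imp_eq_if_abs_le_1:
  fixes x y p :: int
  assumes "p > 2" "\<bar>x\<bar> \<le> 1" "\<bar>y\<bar> \<le> 1" "[x = y] (mod p)"
  shows "x = y"
proof (rule ccontr)
  assume "x \<noteq> y"
  moreover have "p dvd x - y" using assms(4) by (simp add: cong_iff_dvd_diff)
  ultimately have "\<bar>p\<bar> \<le> \<bar>x - y\<bar>" using dvd_imp_le_int by simp
  then show False using assms by linarith
qed

lemma euler_criterion_int: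
  fixes p :: int
  assumes "prime p" "p > 2"
  shows "[Legendre a p = a ^ nat ((p - 1) div 2)] (mod p)"
proof -
  have "prime (nat p)" "2 < nat p" "int (nat p) = p" using assms by auto
  moreover have "(nat p - 1) div 2 = nat ((p - 1) div 2)" using assms(2) by (simp add: nat_div_distrib)
  ultimately show ?thesis using euler_criterion[of "nat p" a] by simp
qed

lemma abs_Legendre_le_1: "\<bar>Legendre a p\<bar> \<le> 1"
  by (simp add: Legendre_def)

lemma Legendre_mult:
  fixes p :: int
  assumes "prime p" "p > 2"
  shows "Legendre (a * b) p = Legendre a p * Legendre b p"
proof (rule cong_imp_eq_if_abs_le_1[OF assms(2)])
  let ?k = "nat ((p - 1) div 2)"
  have "[Legendre a p * Legendre b p = a ^ ?k * b ^ ?k] (mod p)"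
    using euler_criterion_int[OF assms, of a] euler_criterion_int[OF assms, of b] by (rule cong_mult)
  then show "[Legendre (a * b) p = Legendre a p * Legendre b p] (mod p)"
    using euler_criterion_int[OF assms, of "a * b"]
    unfolding power_mult_distrib by (metis cong_sym cong_trans)
  show "\<bar>Legendre a p * Legendre b p\<bar> \<le> 1"
    using abs_Legendre_le_1[of a p] abs_Legendre_le_1[of b p]
    by (simp add: abs_mult mult_le_one)
qed (rule abs_Legendre_le_1)

lemma Legendre_minus_one:
  fixes p :: int
  assumes "prime p" "p > 2"
  shows "Legendre (-1) p = (-1) ^ nat ((p - 1) div 2)"
  using cong_imp_eq_if_abs_le_1[OF assms(2) abs_Legendre_le_1] euler_criterion_int[OF assms]
  by (simp add: power_abs)

lemma Legendre_cong:
  assumes "[a = b] (mod p)"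
  shows "Legendre a p = Legendre b p"
proof -
  have "[a = 0] (mod p) \<longleftrightarrow> [b = 0] (mod p)" "QuadRes p a \<longleftrightarrow> QuadRes p b"
    using assms unfolding QuadRes_def by (meson cong_sym cong_trans)+
  then show ?thesis by (simp add: Legendre_def)
qed

lemma Legendre_square:
  fixes p x :: int
  assumes "prime p" "\<not> p dvd x"
  shows "Legendre (x^2) p = 1"
  using assms by (auto simp: Legendre_def QuadRes_def cong_0_iff prime_dvd_power_iff intro: cong_refl)

lemma Legendre_one:
  fixes p :: int
  assumes "prime p"
  shows "Legendre 1 p = 1"
  using Legendre_square[OF assms, of 1] prime_gt_1_int[OF assms] by simp

lemma not_dvd_if_Legendre_eq_1:
  fixes p x :: int
  assumes "Legendre x p = 1"
  shows "\<not> p dvd x"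
  using assms by (auto simp: Legendre_def cong_0_iff)

lemma minus_one_power_nat_div_2:
  fixes q :: int
  assumes "odd q" "q > 0"
  shows "(-1::int) ^ nat ((q - 1) div 2) = (if q mod 4 = 1 then 1 else -1)"
proof -
  have "even (nat ((q - 1) div 2)) \<longleftrightarrow> q mod 4 = 1"
    using assms by (simp add: even_nat_iff) presburger
  then show ?thesis by (simp add: minus_one_power_iff)
qed

text \<open>If \<open>-4p\<close> is a square modulo the prime \<open>q\<close>, then \<open>(p/q) = (-1/q)\<close>, and reciprocity turns this
  into \<open>(q/p) = \<epsilon>^((q-1)/2)\<close> with \<open>\<epsilon> = (-1)^((p+1)/2)\<close>; by multiplicativity the same holds for
  every odd \<open>m\<close> modulo which \<open>-4p\<close> is a square.\<close>

lemma Legendre_prime_if_minus_4p_square: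
  fixes p q s :: int
  assumes p: "prime p" "p > 2" and q: "prime q" "q > 2" "p \<noteq> q"
    and square: "[s^2 = -4*p] (mod q)"
  shows "Legendre q p = (if q mod 4 = 1 then 1 else (-1) ^ nat ((p + 1) div 2))"
proof -
  have "\<not> q dvd 2" using q(2) by (auto dest: zdvd_imp_le)
  moreover have "\<not> q dvd p" using primes_dvd_imp_eq q(1) p(1) q(3) by blast
  moreover have "-4 * p = 2 * (2 * (-p))" by simp
  ultimately have "\<not> q dvd -4 * p" using q(1) by (simp only: prime_dvd_mult_iff dvd_minus_iff) simp
  moreover have "QuadRes q (-4 * p)" using square unfolding QuadRes_def by blast
  ultimately have "Legendre (-4 * p) q = 1" by (simp add: Legendre_def cong_0_iff)
  moreover have "Legendre (-4 * p) q = Legendre (-1) q * (Legendre (2^2) q * Legendre p q)"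
    unfolding Legendre_mult[OF q(1,2), symmetric] by simp
  moreover have "Legendre (2^2) q = 1" using Legendre_square q(1) \<open>\<not> q dvd 2\<close> by blast
  moreover have odd_q: "odd q" "q > 0" using q prime_odd_int by auto
  ultimately have pq: "Legendre p q = (if q mod 4 = 1 then 1 else -1)"
    using Legendre_minus_one[OF q(1,2)] minus_one_power_nat_div_2[OF odd_q] by (auto split: if_splits)
  have "(-1::int) ^ nat ((p - 1) div 2 * ((q - 1) div 2))
      = ((-1) ^ nat ((q - 1) div 2)) ^ nat ((p - 1) div 2)"
    using p(2) q(2) by (simp add: nat_mult_distrib mult.commute flip: power_mult)
  moreover have "nat ((p + 1) div 2) = Suc (nat ((p - 1) div 2))" using p(2) by simp
  ultimately have "Legendre p q * Legendre q p
      = (if q mod 4 = 1 then 1 else - ((-1) ^ nat ((p + 1) div 2)))"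
    using Quadratic_Reciprocity_int[of p q] p q minus_one_power_nat_div_2[OF odd_q] by simp
  then show ?thesis using pq by (auto split: if_splits)
qed

lemma Legendre_if_minus_4p_square:
  fixes p m s :: int
  assumes p: "prime p" "p > 2"
    and "m > 0" "odd m" "\<not> p dvd m" "[s^2 = -4*p] (mod m)"
  shows "Legendre m p = (if m mod 4 = 1 then 1 else (-1) ^ nat ((p + 1) div 2))"
  using assms(3-6)
proof (induction "nat m" arbitrary: m rule: less_induct)
  case less
  define \<epsilon> :: int where "\<epsilon> = (-1) ^ nat ((p + 1) div 2)"
  show ?case
  proof (cases "m = 1")
    case True
    then show ?thesis using Legendre_one[OF p(1)] by simp
  next
    case False
    then have "\<bar>m\<bar> \<noteq> 1" using less.prems(1) by simp
    then obtain q where q: "prime q" "q dvd m" using prime_factor_int by blast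
    then obtain m' where m': "m = q * m'" by blast
    have "odd q" using q(2) less.prems(2) by (auto dest: dvd_trans)
    then have "q > 2" using prime_gt_1_int[OF q(1)] by (cases "q = 2") auto
    have "m' > 0" using m' less.prems(1) \<open>q > 2\<close> by (simp add: zero_less_mult_iff)
    have "odd m'" "\<not> p dvd m'" using m' less.prems(2,3) by auto
    have "[s^2 = -4*p] (mod m')" "[s^2 = -4*p] (mod q)"
      using less.prems(4) cong_dvd_modulus dvd_triv_right dvd_triv_left unfolding m' by blast+
    have "q \<noteq> p" using q(2) less.prems(3) by auto
    have Lm': "Legendre m' p = (if m' mod 4 = 1 then 1 else \<epsilon>)"
      using less.hyps[of m'] m' \<open>m' > 0\<close> \<open>q > 2\<close> \<open>odd m'\<close> \<open>\<not> p dvd m'\<close>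
        \<open>[s^2 = -4*p] (mod m')\<close> unfolding \<epsilon>_def by simp
    have Lq: "Legendre q p = (if q mod 4 = 1 then 1 else \<epsilon>)"
      using Legendre_prime_if_minus_4p_square[OF p q(1) \<open>q > 2\<close> \<open>q \<noteq> p\<close>[symmetric]]
        \<open>[s^2 = -4*p] (mod q)\<close> unfolding \<epsilon>_def .
    have "Legendre m p = Legendre q p * Legendre m' p"
      using m' Legendre_mult[OF p] by simp
    moreover have "m mod 4 = (q mod 4) * (m' mod 4) mod 4" using m' by (simp add: mod_mult_eq)
    moreover have "q mod 4 = 1 \<or> q mod 4 = 3" "m' mod 4 = 1 \<or> m' mod 4 = 3"
      using \<open>odd q\<close> \<open>odd m'\<close> by presburger+
    moreover have "\<epsilon> * \<epsilon> = 1" unfolding \<epsilon>_def by (simp add: minus_one_power_iff)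
    ultimately show ?thesis using Lq Lm' unfolding \<epsilon>_def[symmetric] by auto
  qed
qed


section \<open>The principal genus of discriminant \<open>-16p\<close>\<close>

text \<open>The unit residues modulo \<open>16p\<close> on which both genus characters (modulo \<open>4\<close> and modulo \<open>p\<close>)
  are trivial.\<close>

definition principal_unit :: "int \<Rightarrow> int \<Rightarrow> bool" where
  "principal_unit p u \<longleftrightarrow> u mod 4 = 1 \<and> Legendre u p = 1"

lemma bqf_mult_principal:
  "bqf a (2*t) b (x*u - t*x * v - b*y * v) (y*u + a*x * v + t*y * v)
     = bqf a (2*t) b x y * (u^2 + (a*b - t^2) * v^2)"
  unfolding bqf_def power2_eq_square by (simp add: algebra_simps)

lemma bqf_mult_bqf_1:
  "bqf a (2*t) b 1 y0 * bqf a (2*t) b x y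
     = (a*x + t*(y + y0*x) + b*y0*y)^2 + (a*b - t^2) * (y - y0*x)^2"
  unfolding bqf_def power2_eq_square by (simp add: algebra_simps)

lemma mult_bqf_complete_square:
  "a * bqf a (2*t) b x y = (a*x + t*y)^2 + (a*b - t^2) * y^2"
  unfolding bqf_def power2_eq_square by (simp add: algebra_simps)

lemma odd_square_mod_4:
  fixes x :: int
  assumes "odd x"
  shows "x^2 mod 4 = 1"
proof -
  obtain k where "x = 2*k + 1" using assms by (auto elim: oddE)
  then have "x^2 = 4*(k^2 + k) + 1" by (simp add: power2_eq_square algebra_simps)
  then show ?thesis by (simp add: mod_add_eq[symmetric])
qed

lemma coprime_16p_iff:
  fixes p u :: int
  assumes "prime p"
  shows "coprime u (16*p) \<longleftrightarrow> odd u \<and> \<not> p dvd u"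
proof -
  have "coprime u (16*p) \<longleftrightarrow> coprime u (2^4) \<and> coprime u p" by simp
  also have "coprime u (2^4) \<longleftrightarrow> odd u" by (simp only: coprime_power_right_iff) simp
  finally have "coprime u (16*p) \<longleftrightarrow> odd u \<and> coprime u p" .
  moreover have "coprime u p \<longleftrightarrow> \<not> p dvd u"
    using assms by (metis coprime_absorb_right coprime_commute not_prime_unit prime_imp_coprime)
  ultimately show ?thesis by blast
qed

lemma coprime_16p_if_principal_unit:
  assumes "prime p" "principal_unit p u"
  shows "coprime u (16*p)"
proof -
  have "odd u" using assms(2) unfolding principal_unit_def by presburger
  moreover have "\<not> p dvd u" using assms(2) not_dvd_if_Legendre_eq_1 unfolding principal_unit_def by blast
  ultimately show ?thesis using coprime_16p_iff[OF assms(1)] by blast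
qed

lemma principal_unit_mult:
  assumes "prime p" "p > 2" "principal_unit p u" "principal_unit p v"
  shows "principal_unit p (u * v)"
  using assms Legendre_mult[OF assms(1,2)] mod_mult_eq[of u 4 v]
  unfolding principal_unit_def by simp

lemma principal_unit_principal_form:
  fixes p x y :: int
  assumes "prime p" "coprime (x^2 + 4*p*y^2) (16*p)"
  shows "principal_unit p (x^2 + 4*p*y^2)"
proof -
  have "odd (x^2 + 4*p*y^2)" "\<not> p dvd x^2 + 4*p*y^2" using assms coprime_16p_iff by blast+
  then have "odd x" "\<not> p dvd x" by (auto simp: power2_eq_square)
  then have "(x^2 + 4*p*y^2) mod 4 = 1"
    using odd_square_mod_4 mod_add_eq[of "x^2" 4 "4*p*y^2"] by simp
  moreover have "[x^2 + 4*p*y^2 = x^2] (mod p)" by (simp add: cong_iff_dvd_diff)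
  ultimately show ?thesis
    using Legendre_cong Legendre_square[OF assms(1) \<open>\<not> p dvd x\<close>] unfolding principal_unit_def by metis
qed

lemma principal_form_cover_mod_16:
  fixes p u :: int
  assumes "u mod 4 = 1" "odd p"
  shows "\<exists>s y. [s^2 + 4*p*y^2 = u] (mod 16)"
proof -
  have u: "u mod 16 = 1 \<or> u mod 16 = 5 \<or> u mod 16 = 9 \<or> u mod 16 = 13" using assms(1) by presburger
  have p: "p mod 4 = 1 \<or> p mod 4 = 3" using assms(2) by presburger
  have "[1^2 + 4*p*0^2 = u] (mod 16)" if "u mod 16 = 1" using that unfolding cong_def by simp
  moreover have "[3^2 + 4*p*0^2 = u] (mod 16)" if "u mod 16 = 9" using that unfolding cong_def by simp
  moreover have "[1^2 + 4*p*1^2 = u] (mod 16)" if "u mod 16 = 5" "p mod 4 = 1"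
    using that unfolding cong_def by simp presburger
  moreover have "[1^2 + 4*p*1^2 = u] (mod 16)" if "u mod 16 = 13" "p mod 4 = 3"
    using that unfolding cong_def by simp presburger
  moreover have "[3^2 + 4*p*1^2 = u] (mod 16)" if "u mod 16 = 5" "p mod 4 = 3"
    using that unfolding cong_def by simp presburger
  moreover have "[3^2 + 4*p*1^2 = u] (mod 16)" if "u mod 16 = 13" "p mod 4 = 1"
    using that unfolding cong_def by simp presburger
  ultimately show ?thesis using u p by blast
qed

lemma principal_form_cover:
  fixes p u :: int
  assumes "prime p" "p > 2" "principal_unit p u"
  shows "\<exists>x y. [x^2 + 4*p*y^2 = u] (mod 16*p)"
proof -
  obtain r where r: "[r^2 = u] (mod p)"
    using assms(3) unfolding principal_unit_def Legendre_def QuadRes_def by (auto split: if_splits)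
  have "odd p" using assms(1,2) by (simp add: prime_odd_int)
  then obtain s y where sy: "[s^2 + 4*p*y^2 = u] (mod 16)"
    using principal_form_cover_mod_16 assms(3) unfolding principal_unit_def by blast
  have cp: "coprime p 16" using \<open>odd p\<close> coprime_power_right_iff[of p 2 4] by simp
  obtain x where x: "[x = r] (mod p)" "[x = s] (mod 16)" using binary_chinese_remainder_int[OF cp] by blast
  have "[x^2 + 4*p*y^2 = r^2 + 0] (mod p)"
    using x(1) by (intro cong_add cong_pow) (auto simp: cong_0_iff)
  then have "[x^2 + 4*p*y^2 = u] (mod p)" using r by (simp add: cong_trans)
  moreover have "[x^2 + 4*p*y^2 = u] (mod 16)"
    using x(2) sy by (meson cong_add cong_pow cong_refl cong_trans)
  ultimately have "[x^2 + 4*p*y^2 = u] (mod p * 16)" using cp by (rule coprime_cong_mult)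
  then show ?thesis by (auto simp: mult.commute)
qed

lemma not_dvd_all_if_det_4p:
  fixes p a t b :: int
  assumes "prime p" "p > 2" "a*b - t^2 = 4*p"
  shows "\<not> (p dvd a \<and> p dvd t \<and> p dvd b)"
proof
  assume "p dvd a \<and> p dvd t \<and> p dvd b"
  then obtain a' t' b' where "a = p*a'" "t = p*t'" "b = p*b'" unfolding dvd_def by blast
  then have "p * (p * (a'*b' - t'^2)) = p * 4" using assms(3) by (simp add: power2_eq_square algebra_simps)
  then have "p * (a'*b' - t'^2) = 4" using assms(2) by simp
  then have "p dvd 4" by (metis dvd_triv_left)
  then have "p dvd 2" using prime_dvd_mult_iff[OF assms(1), of 2 2] by simp
  then show False using assms(2) zdvd_imp_le[of p 2] by simp
qed

lemma unit_values_eq_principal_units: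
  fixes p a c b :: int
  assumes "\<And>x y. coprime (bqf a c b x y) (16*p) \<Longrightarrow> principal_unit p (bqf a c b x y)"
    and "\<And>u. principal_unit p u \<Longrightarrow> \<exists>x y. [bqf a c b x y = u] (mod 16*p)"
    and "prime p"
  shows "unit_values a c b (-(16*p)) = {u mod (16*p) | u. principal_unit p u}"
proof
  have abs_disc: "\<bar>-(16*p)\<bar> = 16*p" using prime_gt_0_int[OF assms(3)] by simp
  show "unit_values a c b (-(16*p)) \<subseteq> {u mod (16*p) | u. principal_unit p u}"
    unfolding unit_values_def abs_disc using assms(1) by auto
  show "{u mod (16*p) | u. principal_unit p u} \<subseteq> unit_values a c b (-(16*p))"
  proof
    fix r assume "r \<in> {u mod (16*p) | u. principal_unit p u}"
    then obtain u where u: "principal_unit p u" "r = u mod (16*p)" by blast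
    obtain x y where xy: "[bqf a c b x y = u] (mod 16*p)" using assms(2)[OF u(1)] by blast
    then have "coprime (bqf a c b x y) (16*p)"
      using coprime_16p_if_principal_unit[OF assms(3) u(1)] cong_imp_coprime cong_sym by blast
    moreover have "r = bqf a c b x y mod (16*p)" using xy u(2) unfolding cong_def by simp
    ultimately show "r \<in> unit_values a c b (-(16*p))" unfolding unit_values_def abs_disc by auto
  qed
qed

context
  fixes p a t b :: int
  assumes p: "prime p" "p > 2" and a: "a > 0" "a mod 4 = 1" and det: "a*b - t^2 = 4*p"
begin

lemma bqf_mod_4:
  assumes "odd (bqf a (2*t) b x y)"
  shows "bqf a (2*t) b x y mod 4 = 1"
proof -
  let ?r = "bqf a (2*t) b x y"
  have sq: "a * ?r = (a*x + t*y)^2 + 4*p*y^2" using mult_bqf_complete_square[of a t b x y] det by simp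
  moreover have "odd (a * ?r)" using assms a(2) by simp presburger
  ultimately have "odd (a*x + t*y)" by auto
  then have "a * ?r mod 4 = 1"
    using sq odd_square_mod_4 mod_add_eq[of "(a*x + t*y)^2" 4 "4*p*y^2"] by simp
  moreover have "a * ?r mod 4 = (a mod 4) * (?r mod 4) mod 4" by (simp add: mod_mult_eq)
  ultimately show ?thesis using a(2) by simp
qed

lemma bqf_1_pos: "bqf a (2*t) b 1 y0 > 0"
proof -
  have "(a + t*y0)^2 + 4*p*y0^2 > 0"
  proof (cases "y0 = 0")
    case True
    then show ?thesis using a(1) by simp
  next
    case False
    then have "4*p*y0^2 > 0" using p(2) by simp
    then show ?thesis by (simp add: add_nonneg_pos)
  qed
  moreover have "a * bqf a (2*t) b 1 y0 = (a + t*y0)^2 + 4*p*y0^2"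
    using mult_bqf_complete_square[of a t b 1 y0] det by simp
  ultimately show ?thesis using a(1) zero_less_mult_pos by metis
qed

text \<open>Evaluating at \<open>y0 \<in> {0, 2, 4}\<close>: if \<open>p\<close> divided all three values it would divide \<open>a\<close>, \<open>t\<close>
  and \<open>b\<close>.\<close>

lemma exists_even_not_dvd_bqf_1: "\<exists>y0. even y0 \<and> \<not> p dvd bqf a (2*t) b 1 y0"
proof (rule ccontr)
  assume "\<not> ?thesis"
  then have d: "p dvd bqf a (2*t) b 1 0" "p dvd bqf a (2*t) b 1 2" "p dvd bqf a (2*t) b 1 4" by auto
  have "bqf a (2*t) b 1 2 - bqf a (2*t) b 1 0 = 4*(t + b)"
    "bqf a (2*t) b 1 4 - bqf a (2*t) b 1 0 = 8*(t + 2*b)" by (simp_all add: bqf_def)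
  then have "p dvd 4*(t + b)" "p dvd 8*(t + 2*b)"
    using dvd_diff[OF d(2) d(1)] dvd_diff[OF d(3) d(1)] by simp_all
  moreover have "p dvd a" using d(1) by (simp add: bqf_def)
  moreover have "coprime p 4" "coprime p 8"
    using p prime_odd_int coprime_power_right_iff[of p 2 2] coprime_power_right_iff[of p 2 3] by auto
  ultimately have "p dvd t + b" "p dvd t + 2*b"
    using coprime_dvd_mult_right_iff[of p 4 "t + b"] coprime_dvd_mult_right_iff[of p 8 "t + 2*b"] by simp_all
  then have "p dvd b" "p dvd t"
    using dvd_diff[of p "t + 2*b" "t + b"] dvd_diff[of p "2*(t + b)" "t + 2*b"] dvd_mult[of p "t + b" 2]
    by simp_all
  then show False using not_dvd_all_if_det_4p[OF p det] \<open>p dvd a\<close> by blast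
qed

text \<open>Values \<open>bqf a (2t) b 1 y0\<close> with \<open>y0\<close> even are \<open>\<equiv> a \<equiv> 1 (mod 4)\<close>, and \<open>-4p\<close> is a square modulo
  them; reciprocity makes them quadratic residues modulo \<open>p\<close>.\<close>

lemma principal_unit_bqf_1:
  assumes "even y0" "\<not> p dvd bqf a (2*t) b 1 y0"
  shows "principal_unit p (bqf a (2*t) b 1 y0)"
proof -
  let ?m = "bqf a (2*t) b 1 y0"
  obtain k where "y0 = 2*k" using assms(1) by blast
  then have "?m = a + 2*(2*t*k + 2*b*k^2)" by (simp add: bqf_def power2_eq_square algebra_simps)
  then have "odd ?m" using a(2) by presburger
  then have m4: "?m mod 4 = 1" by (rule bqf_mod_4)
  have "(t + b*y0)^2 - (-4*p) = ?m * b"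
    using det by (simp add: bqf_def power2_eq_square algebra_simps)
  then have "[(t + b*y0)^2 = -4*p] (mod ?m)" by (simp add: cong_iff_dvd_diff)
  then have "Legendre ?m p = 1"
    using Legendre_if_minus_4p_square[OF p bqf_1_pos \<open>odd ?m\<close> assms(2)] m4 by simp
  then show ?thesis using m4 unfolding principal_unit_def by simp
qed

lemma principal_unit_bqf:
  assumes "coprime (bqf a (2*t) b x y) (16*p)"
  shows "principal_unit p (bqf a (2*t) b x y)"
proof -
  let ?r = "bqf a (2*t) b x y"
  obtain y0 where y0: "even y0" "\<not> p dvd bqf a (2*t) b 1 y0" using exists_even_not_dvd_bqf_1 by blast
  let ?m = "bqf a (2*t) b 1 y0" and ?W = "a*x + t*(y + y0*x) + b*y0*y"
  have Lm: "Legendre ?m p = 1" using principal_unit_bqf_1[OF y0] unfolding principal_unit_def by simp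
  have "odd ?r" "\<not> p dvd ?r" using assms coprime_16p_iff[OF p(1)] by auto
  then have "\<not> p dvd ?m * ?r" using y0(2) p(1) by (simp add: prime_dvd_mult_iff)
  moreover have sq: "?m * ?r = ?W^2 + 4*p*(y - y0*x)^2" using bqf_mult_bqf_1[of a t b y0 x y] det by simp
  ultimately have "\<not> p dvd ?W" by (auto simp: power2_eq_square)
  moreover have "[?m * ?r = ?W^2] (mod p)" using sq by (simp add: cong_iff_dvd_diff)
  ultimately have "Legendre (?m * ?r) p = 1" using Legendre_cong Legendre_square[OF p(1)] by metis
  then have "Legendre ?r p = 1" using Legendre_mult[OF p, of ?m ?r] Lm by simp
  then show ?thesis using bqf_mod_4[OF \<open>odd ?r\<close>] unfolding principal_unit_def by simp
qed

text \<open>Conversely every principal unit is a value modulo \<open>16p\<close>: multiply a principal unit value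
  \<open>m\<close> of the form by a representation of \<open>u/m\<close> by the principal form.\<close>

lemma bqf_cover:
  assumes "principal_unit p u"
  shows "\<exists>x y. [bqf a (2*t) b x y = u] (mod 16*p)"
proof -
  obtain y0 where y0: "even y0" "\<not> p dvd bqf a (2*t) b 1 y0" using exists_even_not_dvd_bqf_1 by blast
  let ?m = "bqf a (2*t) b 1 y0"
  have m: "principal_unit p ?m" using principal_unit_bqf_1[OF y0] .
  obtain i where i: "[?m * i = 1] (mod 16*p)"
    using cong_solve_coprime_int[OF coprime_16p_if_principal_unit[OF p(1) m]] by blast
  have i4: "[?m * i = 1] (mod 4)" using i by (rule cong_dvd_modulus) simp
  have ip: "[?m * i = 1] (mod p)" using i by (rule cong_dvd_modulus) simp
  have "(?m * i) mod 4 = 1" using i4 unfolding cong_def by simp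
  moreover have "(?m * i) mod 4 = ((?m mod 4) * (i mod 4)) mod 4" by (simp add: mod_mult_eq)
  ultimately have "i mod 4 = 1" using m unfolding principal_unit_def by simp
  moreover have "Legendre i p = 1"
  proof -
    have "Legendre (?m * i) p = Legendre 1 p" using Legendre_cong[OF ip] .
    then have "Legendre ?m p * Legendre i p = 1" using Legendre_mult[OF p] Legendre_one[OF p(1)] by simp
    then show ?thesis using m unfolding principal_unit_def by simp
  qed
  ultimately have "principal_unit p i" unfolding principal_unit_def by simp
  then have "principal_unit p (i * u)" using principal_unit_mult[OF p] assms by blast
  then obtain X Y where XY: "[X^2 + 4*p*Y^2 = i * u] (mod 16*p)" using principal_form_cover[OF p] by blast
  let ?x = "X - t*Y - b*y0*Y" and ?y = "y0*X + a*Y + t*y0*Y"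
  have "bqf a (2*t) b ?x ?y = ?m * (X^2 + 4*p*Y^2)"
    using bqf_mult_principal[of a t b 1 X Y y0] det by simp
  moreover have "[?m * (X^2 + 4*p*Y^2) = ?m * (i * u)] (mod 16*p)" using XY by (rule cong_scalar_left)
  moreover have "[?m * (i * u) = u] (mod 16*p)" using cong_mult[OF i cong_refl[of u]] by (simp add: mult.assoc)
  ultimately have "[bqf a (2*t) b ?x ?y = u] (mod 16*p)" by (metis cong_trans)
  then show ?thesis by blast
qed

lemma in_principal_genus_if_mod_4_eq_1: "in_principal_genus p (a, 2*t, b)"
proof -
  let ?G = "{u mod (16*p) | u. principal_unit p u}"
  have "(2*t)^2 - 4*a*b = -(16*p)" "(0::int)^2 - 4*1*(4*p) = -(16*p)"
    using det by (simp_all add: power2_eq_square algebra_simps)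
  moreover have "unit_values a (2*t) b (-(16*p)) = ?G"
    by (rule unit_values_eq_principal_units[OF principal_unit_bqf bqf_cover p(1)])
  moreover have "unit_values 1 0 (4*p) (-(16*p)) = ?G"
  proof (rule unit_values_eq_principal_units[OF _ _ p(1)])
    show "principal_unit p (bqf 1 0 (4*p) x y)" if "coprime (bqf 1 0 (4*p) x y) (16*p)" for x y
      using principal_unit_principal_form[OF p(1)] that by (simp add: bqf_def)
    show "\<exists>x y. [bqf 1 0 (4*p) x y = u] (mod 16*p)" if "principal_unit p u" for u
      using principal_form_cover[OF p that] by (simp add: bqf_def)
  qed
  ultimately show ?thesis unfolding in_principal_genus_def same_genus_def by simp
qed

end

lemma unit_values_swap: "unit_values a c b D = unit_values b c a D"
proof -
  have "bqf a c b x y = bqf b c a y x" for x y by (simp add: bqf_def algebra_simps)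
  then show ?thesis unfolding unit_values_def by (simp only:) blast
qed

lemma in_principal_genus_swap:
  assumes "in_principal_genus p (b, c, a)"
  shows "in_principal_genus p (a, c, b)"
  using assms unit_values_swap unfolding in_principal_genus_def same_genus_def by (simp add: mult_ac)

section \<open>Adjugates of \<open>3 \<times> 3\<close> integer matrices\<close>

lemma numeral_4_5_eq_3: "(4::3) = 1" "(5::3) = 2"
  by simp_all

lemma cof3_nth:
  "cof3 A $1$1 = A$2$2 * A$3$3 - A$2$3 * A$3$2"
  "cof3 A $1$2 = A$2$3 * A$3$1 - A$2$1 * A$3$3"
  "cof3 A $1$3 = A$2$1 * A$3$2 - A$2$2 * A$3$1"
  "cof3 A $2$1 = A$3$2 * A$1$3 - A$3$3 * A$1$2"
  "cof3 A $2$2 = A$3$3 * A$1$1 - A$3$1 * A$1$3"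
  "cof3 A $2$3 = A$3$1 * A$1$2 - A$3$2 * A$1$1"
  "cof3 A $3$1 = A$1$2 * A$2$3 - A$1$3 * A$2$2"
  "cof3 A $3$2 = A$1$3 * A$2$1 - A$1$1 * A$2$3"
  "cof3 A $3$3 = A$1$1 * A$2$2 - A$1$2 * A$2$1"
  by (simp_all add: cof3_def numeral_4_5_eq_3)

lemma matrix_mult_nth_3:
  "((A::'a::comm_ring_1^3^'n) ** (B::'a^'m^3)) $ i $ j = A$i$1 * B$1$j + A$i$2 * B$2$j + A$i$3 * B$3$j"
  by (simp add: matrix_matrix_mult_def sum_3)

lemma cof3_mult: "cof3 (A ** B) = cof3 A ** cof3 B"
  unfolding vec_eq_iff forall_3 by (simp add: cof3_nth matrix_mult_nth_3; simp add: algebra_simps)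

lemma cof3_transpose: "cof3 (transpose A) = transpose (cof3 A)"
  unfolding vec_eq_iff forall_3 by (simp add: cof3_nth transpose_def; simp add: algebra_simps)

lemma mult_transpose_cof3: "A ** transpose (cof3 A) = mat (det A)"
  unfolding vec_eq_iff forall_3
  by (simp add: cof3_nth matrix_mult_nth_3 det_3 transpose_def mat_def algebra_simps)

lemma det_mat_3: "det (mat c :: int^3^3) = c^3"
  by (simp add: det_3 mat_def power3_eq_cube)

lemma det_cof3:
  assumes "det A \<noteq> 0"
  shows "det (cof3 A) = det A ^ 2"
proof -
  have "det A * det (cof3 A) = det A * det A ^ 2"
    using arg_cong[OF mult_transpose_cof3[of A], of det]
    by (simp add: det_mul det_mat_3 power3_eq_cube power2_eq_square)
  then show ?thesis using assms by simp
qed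

lemma cof3_congruence: "cof3 (transpose V ** A ** V) = transpose (cof3 V) ** cof3 A ** cof3 V"
  by (simp add: cof3_mult cof3_transpose)

lemma det_congruence: "det (transpose V ** A ** V) = det V ^ 2 * det (A::int^3^3)"
  by (simp add: det_mul power2_eq_square)

lemma dvd_matrix_mult_3:
  fixes A B :: "int^3^3"
  assumes "\<And>i j. d dvd B$i$j"
  shows "d dvd (A ** B)$i$j" "d dvd (B ** A)$i$j"
  using assms by (simp_all add: matrix_mult_nth_3)

lemma tern_equivalent_if_congruent:
  fixes A B V W N :: "int^3^3"
  assumes "det V = 1" "det W = 1" "transpose V ** A ** V = N" "transpose W ** B ** W = N"
  shows "tern_equivalent A B"
proof -
  let ?W' = "transpose (cof3 W)"
  let ?U = "transpose (V ** ?W')"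
  have "W ** ?W' = mat 1" using mult_transpose_cof3[of W] assms(2) by simp
  have "det ?U = 1" using assms(1,2) det_cof3[of W] by (simp add: det_mul)
  have "?U ** A ** transpose ?U = transpose ?W' ** (transpose V ** A ** V) ** ?W'"
    by (simp add: matrix_transpose_mul matrix_mul_assoc)
  also have "\<dots> = transpose ?W' ** (transpose W ** B ** W) ** ?W'" using assms(3,4) by simp
  also have "\<dots> = transpose (W ** ?W') ** B ** (W ** ?W')"
    by (simp add: matrix_transpose_mul matrix_mul_assoc)
  also have "\<dots> = B" using \<open>W ** ?W' = mat 1\<close> by simp
  finally show ?thesis unfolding tern_equivalent_def using \<open>det ?U = 1\<close> by metis
qed

text \<open>A \<open>3 \<times> 2\<close> matrix with coprime \<open>2 \<times> 2\<close> minors is the first two columns of a matrix of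
  determinant \<open>1\<close>: the third column is a B\'ezout combination for the minors.\<close>

definition adjoin_column :: "int^2^3 \<Rightarrow> int \<Rightarrow> int \<Rightarrow> int \<Rightarrow> int^3^3" where
  "adjoin_column M c1 c2 c3 =
     vector [vector [M$1$1, M$1$2, c1], vector [M$2$1, M$2$2, c2], vector [M$3$1, M$3$2, c3]]"

lemma adjoin_column_nth:
  "adjoin_column M c1 c2 c3 $1$1 = M$1$1" "adjoin_column M c1 c2 c3 $1$2 = M$1$2"
  "adjoin_column M c1 c2 c3 $2$1 = M$2$1" "adjoin_column M c1 c2 c3 $2$2 = M$2$2"
  "adjoin_column M c1 c2 c3 $3$1 = M$3$1" "adjoin_column M c1 c2 c3 $3$2 = M$3$2"
  "adjoin_column M c1 c2 c3 $1$3 = c1" "adjoin_column M c1 c2 c3 $2$3 = c2"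
  "adjoin_column M c1 c2 c3 $3$3 = c3"
  by (simp_all add: adjoin_column_def)

lemma exists_adjoin_column_det_1:
  fixes M :: "int^2^3"
  assumes "Gcd (minors32 M) = 1"
  shows "\<exists>c1 c2 c3. det (adjoin_column M c1 c2 c3) = 1"
proof -
  define n1 where "n1 = M$2$1 * M$3$2 - M$2$2 * M$3$1"
  define n2 where "n2 = M$3$1 * M$1$2 - M$3$2 * M$1$1"
  define n3 where "n3 = M$1$1 * M$2$2 - M$1$2 * M$2$1"
  define g where "g = gcd n1 (gcd n2 n3)"
  have gd: "g dvd n1" "g dvd n2" "g dvd n3" unfolding g_def by (auto intro: dvd_trans)
  have "g dvd m" if "m \<in> minors32 M" for m
  proof -
    from that obtain r s where rs: "r \<noteq> s" "m = M$r$1*M$s$2 - M$r$2*M$s$1" unfolding minors32_def by blast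
    have "m = n1 \<or> m = -n1 \<or> m = n2 \<or> m = -n2 \<or> m = n3 \<or> m = -n3"
      using exhaust_3[of r] exhaust_3[of s] rs unfolding n1_def n2_def n3_def
      by (elim disjE; simp add: algebra_simps)
    then show ?thesis using gd by auto
  qed
  then have "g dvd Gcd (minors32 M)" by (rule Gcd_greatest)
  then have "g dvd 1" using assms by simp
  moreover have "g \<ge> 0" unfolding g_def by simp
  ultimately have g1: "g = 1" by simp
  obtain u0 v0 where uv: "u0 * n2 + v0 * n3 = gcd n2 n3" using bezout_int by blast
  obtain uu vv where uvv: "uu * n1 + vv * gcd n2 n3 = g" unfolding g_def using bezout_int by blast
  have "det (adjoin_column M uu (vv*u0) (vv * v0)) = uu * n1 + (vv*u0) * n2 + (vv * v0) * n3"
    unfolding n1_def n2_def n3_def by (simp add: det_3 adjoin_column_nth algebra_simps)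
  also have "\<dots> = uu * n1 + vv * (u0 * n2 + v0 * n3)" by (simp add: algebra_simps)
  also have "\<dots> = 1" using uv uvv g1 by simp
  finally show ?thesis by blast
qed

lemma adjoin_column_congruence:
  fixes M :: "int^2^3" and A :: "int^3^3" and c1 c2 c3 :: int
  defines "U \<equiv> adjoin_column M c1 c2 c3"
  shows "(transpose U ** A ** U) $ 1 $ 1 = (transpose M ** A ** M) $ 1 $ 1"
    "(transpose U ** A ** U) $ 1 $ 2 = (transpose M ** A ** M) $ 1 $ 2"
    "(transpose U ** A ** U) $ 2 $ 2 = (transpose M ** A ** M) $ 2 $ 2"
  unfolding U_def by (simp_all add: matrix_mult_nth_3 transpose_def adjoin_column_nth)


section \<open>Ternary forms extending a binary form\<close>

definition block_form :: "int \<Rightarrow> int \<Rightarrow> int \<Rightarrow> int \<Rightarrow> int \<Rightarrow> int \<Rightarrow> int^3^3" where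
  "block_form a t b X Y Z = vector [vector [a, t, X], vector [t, b, Y], vector [X, Y, Z]]"

lemma block_form_nth:
  "block_form a t b X Y Z $1$1 = a" "block_form a t b X Y Z $1$2 = t" "block_form a t b X Y Z $1$3 = X"
  "block_form a t b X Y Z $2$1 = t" "block_form a t b X Y Z $2$2 = b" "block_form a t b X Y Z $2$3 = Y"
  "block_form a t b X Y Z $3$1 = X" "block_form a t b X Y Z $3$2 = Y" "block_form a t b X Y Z $3$3 = Z"
  by (simp_all add: block_form_def)

lemma symmetric3_block_form: "symmetric3 (block_form a t b X Y Z)"
  unfolding symmetric3_def vec_eq_iff forall_3 by (simp add: transpose_def block_form_nth)

lemma symmetric3_eq_block_form:
  assumes "symmetric3 A"
  shows "A = block_form (A$1$1) (A$1$2) (A$2$2) (A$1$3) (A$2$3) (A$3$3)"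
proof -
  have "A$j$i = A$i$j" for i j
  proof -
    have "transpose A $ i $ j = A $ i $ j" using assms unfolding symmetric3_def by simp
    then show ?thesis by (simp add: transpose_def)
  qed
  then show ?thesis unfolding vec_eq_iff forall_3 by (simp add: block_form_nth)
qed

lemma properly_represents_block_form:
  "properly_represents (block_form a t b X Y Z) (bin_mat a t b)"
proof -
  define M :: "int^2^3" where "M = vector [vector [1, 0], vector [0, 1], vector [0, 0]]"
  have "transpose M ** block_form a t b X Y Z ** M = bin_mat a t b"
    by (simp add: vec_eq_iff forall_2 matrix_mult_nth_3 transpose_def M_def block_form_nth bin_mat_def)
  moreover have "1 \<in> minors32 M"
    unfolding minors32_def by (rule CollectI, rule exI[of _ 1], rule exI[of _ 2]) (simp add: M_def)
  then have "Gcd (minors32 M) = 1" by (rule Gcd_eq_1_I[rotated]) simp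
  ultimately show ?thesis unfolding properly_represents_def by blast
qed

text \<open>When \<open>(X, Y) = (a w1 + t w2, t w1 + b w2)/2\<close> and \<open>Z\<close> is chosen to make the determinant
  \<open>4p\<^sup>2\<close>, every cofactor of the block form is divisible by \<open>p\<close>; this is the quotient.\<close>

definition block_adjugate :: "int \<Rightarrow> int \<Rightarrow> int \<Rightarrow> int \<Rightarrow> int \<Rightarrow> int^3^3" where
  "block_adjugate a t b w1 w2 = vector [vector [b + w1^2, w1*w2 - t, -2*w1],
     vector [w1*w2 - t, a + w2^2, -2*w2], vector [-2*w1, -2*w2, 4]]"

lemma block_adjugate_nth:
  "block_adjugate a t b w1 w2 $1$1 = b + w1^2" "block_adjugate a t b w1 w2 $1$2 = w1*w2 - t"
  "block_adjugate a t b w1 w2 $1$3 = -2*w1" "block_adjugate a t b w1 w2 $2$1 = w1*w2 - t"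
  "block_adjugate a t b w1 w2 $2$2 = a + w2^2" "block_adjugate a t b w1 w2 $2$3 = -2*w2"
  "block_adjugate a t b w1 w2 $3$1 = -2*w1" "block_adjugate a t b w1 w2 $3$2 = -2*w2"
  "block_adjugate a t b w1 w2 $3$3 = 4"
  by (simp_all add: block_adjugate_def)

context
  fixes p a t b X Y Z w1 w2 :: int
  assumes det: "a*b - t^2 = 4*p" and X: "2*X = a*w1 + t*w2" and Y: "2*Y = t*w1 + b*w2"
    and Z: "4*Z = 4*p + a*w1^2 + 2*t*w1*w2 + b*w2^2"
begin

lemma block_form_cofactor_identities:
  "b*Z - Y*Y = p*(b + w1^2)" "Y*X - t*Z = p*(w1*w2 - t)" "t*Y - b*X = p*(-2*w1)"
  "Z*a - X*X = p*(a + w2^2)" "X*t - Y*a = p*(-2*w2)"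
proof -
  have "4*(b*Z - Y*Y) = 4*(p*(b + w1^2))"
    using arg_cong[OF Z, of "(*) b"] arg_cong2[OF Y Y, of "(*)"] arg_cong[OF det, of "\<lambda>x. x * w1^2"]
    by (simp add: algebra_simps power2_eq_square)
  then show "b*Z - Y*Y = p*(b + w1^2)" by simp
  have "4*(Y*X - t*Z) = 4*(p*(w1*w2 - t))"
    using arg_cong2[OF X Y, of "(*)"] arg_cong[OF Z, of "(*) t"] arg_cong[OF det, of "\<lambda>x. x * w1 * w2"]
    by (simp add: algebra_simps power2_eq_square)
  then show "Y*X - t*Z = p*(w1*w2 - t)" by simp
  have "2*(t*Y - b*X) = 2*(p*(-2*w1))"
    using arg_cong[OF Y, of "(*) t"] arg_cong[OF X, of "(*) b"] arg_cong[OF det, of "\<lambda>x. x * w1"]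
    by (simp add: algebra_simps power2_eq_square)
  then show "t*Y - b*X = p*(-2*w1)" by simp
  have "4*(Z*a - X*X) = 4*(p*(a + w2^2))"
    using arg_cong[OF Z, of "(*) a"] arg_cong2[OF X X, of "(*)"] arg_cong[OF det, of "\<lambda>x. x * w2^2"]
    by (simp add: algebra_simps power2_eq_square)
  then show "Z*a - X*X = p*(a + w2^2)" by simp
  have "2*(X*t - Y*a) = 2*(p*(-2*w2))"
    using arg_cong[OF X, of "(*) t"] arg_cong[OF Y, of "(*) a"] arg_cong[OF det, of "\<lambda>x. x * w2"]
    by (simp add: algebra_simps power2_eq_square)
  then show "X*t - Y*a = p*(-2*w2)" by simp
qed

lemma cof3_block_form: "cof3 (block_form a t b X Y Z) $ i $ j = p * block_adjugate a t b w1 w2 $ i $ j"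
  using exhaust_3[of i] exhaust_3[of j] block_form_cofactor_identities det
  by (elim disjE; simp add: cof3_nth block_form_nth block_adjugate_nth algebra_simps power2_eq_square)

lemma det_block_form: "det (block_form a t b X Y Z) = 4*p^2"
proof -
  have "det (block_form a t b X Y Z) = a*(b*Z - Y*Y) + t*(Y*X - t*Z) + X*(t*Y - b*X)"
    by (simp add: det_3 block_form_nth algebra_simps)
  also have "\<dots> = a*(p*(b + w1^2)) + t*(p*(w1*w2 - t)) + X*(p*(-2*w1))"
    using block_form_cofactor_identities by simp
  also have "\<dots> = p*(a*b - t^2) + p*w1*(a*w1 + t*w2 - 2*X)" by (simp add: algebra_simps power2_eq_square)
  also have "\<dots> = 4*p^2" using det X by (simp add: power2_eq_square)
  finally show ?thesis .
qed

end

definition shear3 :: "int \<Rightarrow> int \<Rightarrow> int^3^3" where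
  "shear3 k1 k2 = vector [vector [1, 0, -k1], vector [0, 1, -k2], vector [0, 0, 1]]"

lemma det_shear3: "det (shear3 k1 k2) = 1"
  by (simp add: det_3 shear3_def)

lemma shear3_congruence:
  "transpose (shear3 k1 k2) ** block_form a t b x y z ** shear3 k1 k2
     = block_form a t b (x - a*k1 - t*k2) (y - t*k1 - b*k2)
         (z - 2*k1*x - 2*k2*y + a*k1^2 + 2*t*k1*k2 + b*k2^2)"
  unfolding vec_eq_iff forall_3
  by (simp add: matrix_mult_nth_3 transpose_def block_form_nth shear3_def algebra_simps power2_eq_square)

text \<open>The last-column cofactors are \<open>b x - t y\<close> and \<open>a y - t x\<close> up to sign; solving for \<open>(x, y)\<close>
  costs a factor \<open>a b - t\<^sup>2 = 4p\<close>, so divisibility by \<open>2p\<close> leaves the half-integral relations below.\<close>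

lemma block_form_last_column:
  fixes p a t b x y z :: int
  assumes "p > 0" "a*b - t^2 = 4*p"
    and "2*p dvd cof3 (block_form a t b x y z) $1$3" "2*p dvd cof3 (block_form a t b x y z) $2$3"
  shows "\<exists>q1 q2. 2*x = a*q1 + t*q2 \<and> 2*y = t*q1 + b*q2"
proof -
  have "2*p dvd t*y - b*x" using assms(3) by (simp add: cof3_nth block_form_nth)
  then obtain q1 where q1: "b*x - t*y = 2*p*q1" by (metis dvd_def minus_diff_eq mult_minus_right)
  have "2*p dvd x*t - y*a" using assms(4) by (simp add: cof3_nth block_form_nth)
  then obtain q2 where q2: "a*y - t*x = 2*p*q2" by (metis dvd_def minus_diff_eq mult_minus_right mult.commute)
  have "(2*p)*(a*q1 + t*q2) = (2*p)*(2*x)"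
    using arg_cong[OF q1, of "(*) a"] arg_cong[OF q2, of "(*) t"] arg_cong[OF assms(2), of "\<lambda>v. v * x"]
    by (simp add: algebra_simps power2_eq_square)
  then have "2*x = a*q1 + t*q2" using assms(1) by simp
  have "(2*p)*(t*q1 + b*q2) = (2*p)*(2*y)"
    using arg_cong[OF q1, of "(*) t"] arg_cong[OF q2, of "(*) b"] arg_cong[OF assms(2), of "\<lambda>v. v * y"]
    by (simp add: algebra_simps power2_eq_square)
  then have "2*y = t*q1 + b*q2" using assms(1) by simp
  then show ?thesis using \<open>2*x = a*q1 + t*q2\<close> by blast
qed

lemma block_form_corner:
  fixes p a t b X Y Z w1 w2 :: int
  assumes "p > 0" "a*b - t^2 = 4*p" "2*X = a*w1 + t*w2" "2*Y = t*w1 + b*w2"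
    and "det (block_form a t b X Y Z) = 4*p^2"
  shows "4*Z = 4*p + a*w1^2 + 2*t*w1*w2 + b*w2^2"
proof -
  have "a*(b*Z - Y*Y) - t*(t*Z - X*Y) + X*(t*Y - b*X) = 4*p^2"
    using assms(5) by (simp add: det_3 block_form_nth algebra_simps)
  moreover have "b*((2*X)*(2*X)) = b*((a*w1 + t*w2)*(a*w1 + t*w2))" using assms(3) by simp
  moreover have "t*((2*X)*(2*Y)) = t*((a*w1 + t*w2)*(t*w1 + b*w2))" using assms(3,4) by simp
  moreover have "a*((2*Y)*(2*Y)) = a*((t*w1 + b*w2)*(t*w1 + b*w2))" using assms(4) by simp
  moreover have "(a*b - t^2)*Z = 4*p*Z" "(a*b - t^2)*(a*w1^2 + 2*t*w1*w2 + b*w2^2)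
      = 4*p*(a*w1^2 + 2*t*w1*w2 + b*w2^2)" using assms(2) by simp_all
  ultimately have "(4*p)*(4*Z) = (4*p)*(4*p + a*w1^2 + 2*t*w1*w2 + b*w2^2)"
    by (simp add: algebra_simps power2_eq_square)
  then show ?thesis using assms(1) by simp
qed

text \<open>The normal form of a ternary form with invariants \<open>(2p, 1)\<close> extending \<open>(a, 2t, b)\<close>. The
  parameters \<open>w1, w2 \<in> {0, 1}\<close> are forced by the parities of \<open>b\<close> and \<open>a\<close>; note that the divisions
  are exact only when the form exists.\<close>

definition reduced_form :: "int \<Rightarrow> int \<Rightarrow> int \<Rightarrow> int \<Rightarrow> int^3^3" where
  "reduced_form p a t b = (let w1 = b mod 2; w2 = a mod 2 in
     block_form a t b ((a*w1 + t*w2) div 2) ((t*w1 + b*w2) div 2)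
       ((4*p + a*w1^2 + 2*t*w1*w2 + b*w2^2) div 4))"

lemma block_form_eq_reduced_form:
  assumes "2*X = a*w1 + t*w2" "2*Y = t*w1 + b*w2" "4*Z = 4*p + a*w1^2 + 2*t*w1*w2 + b*w2^2"
    and "w1 = b mod 2" "w2 = a mod 2"
  shows "block_form a t b X Y Z = reduced_form p a t b"
proof -
  have "X = (a*w1 + t*w2) div 2" "Y = (t*w1 + b*w2) div 2"
    "Z = (4*p + a*w1^2 + 2*t*w1*w2 + b*w2^2) div 4"
    using assms(1-3) by (simp_all flip: assms(1-3))
  then show ?thesis unfolding reduced_form_def Let_def assms(4,5) by simp
qed

lemma block_form_reduction:
  fixes p a t b x y z :: int
  assumes "p > 0" "a*b - t^2 = 4*p" "det (block_form a t b x y z) = 4*p^2"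
    and cof_dvd: "\<And>i j. 2*p dvd cof3 (block_form a t b x y z) $ i $ j"
  shows "\<exists>V. det V = 1 \<and> transpose V ** block_form a t b x y z ** V = reduced_form p a t b"
proof -
  obtain q1 q2 where q: "2*x = a*q1 + t*q2" "2*y = t*q1 + b*q2"
    using block_form_last_column[OF assms(1,2) cof_dvd cof_dvd] by blast
  define k1 w1 k2 w2 where "k1 = q1 div 2" and "w1 = q1 mod 2" and "k2 = q2 div 2" and "w2 = q2 mod 2"
  then have q_eq: "q1 = 2*k1 + w1" "q2 = 2*k2 + w2" by simp_all
  define V X Y Z where "V = shear3 k1 k2" and "X = x - a*k1 - t*k2" and "Y = y - t*k1 - b*k2"
    and "Z = z - 2*k1*x - 2*k2*y + a*k1^2 + 2*t*k1*k2 + b*k2^2"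
  have V: "transpose V ** block_form a t b x y z ** V = block_form a t b X Y Z"
    unfolding V_def X_def Y_def Z_def by (rule shear3_congruence)
  have "det V = 1" unfolding V_def by (rule det_shear3)
  have X: "2*X = a*w1 + t*w2" and Y: "2*Y = t*w1 + b*w2"
    unfolding X_def Y_def using q q_eq by (simp_all add: algebra_simps)
  have "det (block_form a t b X Y Z) = 4*p^2"
    using V[symmetric] assms(3) \<open>det V = 1\<close> by (simp add: det_mul)
  then have Z: "4*Z = 4*p + a*w1^2 + 2*t*w1*w2 + b*w2^2"
    by (rule block_form_corner[OF assms(1,2) X Y])
  have "2*p dvd cof3 (block_form a t b X Y Z) $ i $ j" for i j
    unfolding V[symmetric] cof3_congruence by (intro dvd_matrix_mult_3 cof_dvd)
  then have "p*2 dvd p * block_adjugate a t b w1 w2 $ i $ j" for i j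
    using cof3_block_form[OF assms(2) X Y Z] by (simp add: mult.commute)
  then have "2 dvd block_adjugate a t b w1 w2 $ i $ j" for i j
    using assms(1) by simp
  from this[of 1 1] this[of 2 2] have "even (b + w1^2)" "even (a + w2^2)"
    by (simp_all add: block_adjugate_nth)
  moreover have "w1 = 0 \<or> w1 = 1" "w2 = 0 \<or> w2 = 1" unfolding w1_def w2_def by presburger+
  ultimately have "w1 = b mod 2" "w2 = a mod 2" by (auto; presburger)+
  then show ?thesis using V \<open>det V = 1\<close> block_form_eq_reduced_form[OF X Y Z] by metis
qed

lemma congruent_to_reduced_form:
  fixes p a t b :: int and A :: "int^3^3"
  assumes "p > 0" "a*b - t^2 = 4*p" "symmetric3 A" "tern_invariants A (2*p) 1"
    and "properly_represents A (bin_mat a t b)"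
  shows "\<exists>V. det V = 1 \<and> transpose V ** A ** V = reduced_form p a t b"
proof -
  obtain M where M: "transpose M ** A ** M = bin_mat a t b" "Gcd (minors32 M) = 1"
    using assms(5) unfolding properly_represents_def by blast
  obtain c1 c2 c3 where U: "det (adjoin_column M c1 c2 c3) = 1"
    using exists_adjoin_column_det_1[OF M(2)] by blast
  define U where "U = adjoin_column M c1 c2 c3"
  define B where "B = transpose U ** A ** U"
  have "symmetric3 B"
    using assms(3) unfolding B_def symmetric3_def by (simp add: matrix_transpose_mul matrix_mul_assoc)
  moreover have "B$1$1 = a" "B$1$2 = t" "B$2$2 = b"
    using adjoin_column_congruence[of M c1 c2 c3 A] M(1) unfolding B_def U_def by (simp_all add: bin_mat_def)
  ultimately have B: "B = block_form a t b (B$1$3) (B$2$3) (B$3$3)"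
    using symmetric3_eq_block_form by metis
  have "det A = 4*p^2" using assms(4) unfolding tern_invariants_def by (simp add: power2_eq_square)
  then have "det B = 4*p^2" using U unfolding B_def U_def by (simp add: det_congruence)
  have "2*p dvd cof3 A $ i $ j" for i j
    using assms(4) Gcd_dvd[of "cof3 A $ i $ j" "{cof3 A $ i $ j | i j. True}"]
    unfolding tern_invariants_def tern_Omega_def by auto
  then have "2*p dvd cof3 B $ i $ j" for i j
    unfolding B_def cof3_congruence by (intro dvd_matrix_mult_3)
  then obtain V where "det V = 1" "transpose V ** B ** V = reduced_form p a t b"
    using block_form_reduction[OF assms(1,2), of "B$1$3" "B$2$3" "B$3$3"] \<open>det B = 4*p^2\<close> B by metis
  moreover have "transpose (U ** V) ** A ** (U ** V) = transpose V ** B ** V"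
    unfolding B_def by (simp add: matrix_transpose_mul matrix_mul_assoc)
  moreover have "det (U ** V) = 1" using U \<open>det V = 1\<close> unfolding U_def by (simp add: det_mul)
  ultimately show ?thesis by metis
qed

lemma Gcd_entries_eqI:
  fixes A :: "int^3^3"
  assumes "g \<ge> 0" "\<And>i j. g dvd A$i$j" "\<And>c. (\<And>i j. c dvd A$i$j) \<Longrightarrow> c dvd g"
  shows "Gcd {A$i$j | i j. True} = g"
proof (rule Gcd_eqI)
  show "normalize g = g" using assms(1) by simp
  show "\<And>x. x \<in> {A$i$j | i j. True} \<Longrightarrow> g dvd x" using assms(2) by auto
  fix c assume "\<And>x. x \<in> {A$i$j | i j. True} \<Longrightarrow> c dvd x"
  then show "c dvd g" by (intro assms(3)) blast
qed

lemma tern_primitive_block_form: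
  fixes p a t b X Y Z w1 w2 :: int
  assumes p: "prime p" "p > 2" and det: "a*b - t^2 = 4*p"
    and Z: "4*Z = 4*p + a*w1^2 + 2*t*w1*w2 + b*w2^2"
    and w: "w1 \<in> {0, 1}" "w2 \<in> {0, 1}" "even (b + w1^2)" "even (a + w2^2)"
  shows "tern_primitive (block_form a t b X Y Z)"
  unfolding tern_primitive_def tern_tau_def
proof (rule Gcd_entries_eqI)
  fix c assume "\<And>i j. c dvd block_form a t b X Y Z $ i $ j"
  then have c: "c dvd a" "c dvd t" "c dvd b" "c dvd Z" using block_form_nth by metis+
  show "c dvd 1"
  proof (rule ccontr)
    assume "\<not> c dvd 1"
    then obtain q where q: "prime q" "q dvd c" using prime_factor_int by (metis abs_dvd_iff dvd_refl)
    then have "q dvd a" "q dvd t" "q dvd b" "q dvd Z" using c dvd_trans by blast+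
    then have "q dvd 4*Z - a*w1^2 - 2*t*w1*w2 - b*w2^2" by simp
    then have "q dvd 2 * (2 * p)" using Z by simp
    then consider "q dvd 2" | "q dvd p" using prime_dvd_mult_iff[OF q(1)] by metis
    then show False
    proof cases
      case 1
      then have "q = 2" using q(1) prime_gt_1_int[of q] zdvd_imp_le[of q 2] by fastforce
      then have "w1 = 0" "w2 = 0" using w \<open>q dvd a\<close> \<open>q dvd b\<close> by auto
      then have "q dvd p" using Z \<open>q dvd Z\<close> \<open>q = 2\<close> by simp
      then show False using \<open>q = 2\<close> p prime_odd_int by blast
    next
      case 2
      then have "q = p" using q(1) p(1) by (simp add: primes_dvd_imp_eq)
      then show False using not_dvd_all_if_det_4p[OF p det] \<open>q dvd a\<close> \<open>q dvd t\<close> \<open>q dvd b\<close> by blast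
    qed
  qed
qed auto

definition reciprocal_block :: "int \<Rightarrow> int \<Rightarrow> int \<Rightarrow> int \<Rightarrow> int \<Rightarrow> int^3^3" where
  "reciprocal_block f11 f12 f22 w1 w2 =
     vector [vector [f11, f12, -w1], vector [f12, f22, -w2], vector [-w1, -w2, 2]]"

lemma reciprocal_block_nth:
  "reciprocal_block f11 f12 f22 w1 w2 $1$1 = f11" "reciprocal_block f11 f12 f22 w1 w2 $1$2 = f12"
  "reciprocal_block f11 f12 f22 w1 w2 $1$3 = -w1" "reciprocal_block f11 f12 f22 w1 w2 $2$1 = f12"
  "reciprocal_block f11 f12 f22 w1 w2 $2$2 = f22" "reciprocal_block f11 f12 f22 w1 w2 $2$3 = -w2"
  "reciprocal_block f11 f12 f22 w1 w2 $3$1 = -w1" "reciprocal_block f11 f12 f22 w1 w2 $3$2 = -w2"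
  "reciprocal_block f11 f12 f22 w1 w2 $3$3 = 2"
  by (simp_all add: reciprocal_block_def)

lemma det_scaled_3: "det (\<chi> i j. c * (A::int^3^3) $ i $ j) = c^3 * det A"
  by (simp add: det_3 power3_eq_cube algebra_simps)

context
  fixes p a t b X Y Z w1 w2 f11 f12 f22 :: int
  assumes p: "prime p" "p > 2" and det: "a*b - t^2 = 4*p"
    and X: "2*X = a*w1 + t*w2" and Y: "2*Y = t*w1 + b*w2"
    and Z: "4*Z = 4*p + a*w1^2 + 2*t*w1*w2 + b*w2^2"
    and f: "2*f11 = b + w1^2" "2*f12 = w1*w2 - t" "2*f22 = a + w2^2" "even f11" "even f22"
    and w: "w1 \<in> {0, 1}" "w2 \<in> {0, 1}" "w1 = 1 \<or> w2 = 1 \<or> t mod 4 = 2"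
begin

lemma cof3_block_form_eq_reciprocal_block:
  "cof3 (block_form a t b X Y Z) $ i $ j = (2*p) * reciprocal_block f11 f12 f22 w1 w2 $ i $ j"
proof -
  have "block_adjugate a t b w1 w2 $ i $ j = 2 * reciprocal_block f11 f12 f22 w1 w2 $ i $ j"
    using exhaust_3[of i] exhaust_3[of j] f
    by (elim disjE; simp add: block_adjugate_nth reciprocal_block_nth)
  then show ?thesis using cof3_block_form[OF det X Y Z] by simp
qed

text \<open>By the last hypothesis, the cofactors \<open>-2 w1 p\<close>, \<open>-2 w2 p\<close>, \<open>(w1 w2 - t) p\<close> and \<open>4p\<close> alone
  have gcd \<open>2p\<close>.\<close>

lemma tern_Omega_block_form: "tern_Omega (block_form a t b X Y Z) = 2*p"
  unfolding tern_Omega_def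
proof (rule Gcd_entries_eqI)
  show "2*p \<ge> 0" using p(2) by simp
  show "2*p dvd cof3 (block_form a t b X Y Z) $ i $ j" for i j
    using cof3_block_form_eq_reciprocal_block by simp
  fix c assume c: "\<And>i j. c dvd cof3 (block_form a t b X Y Z) $ i $ j"
  have "c dvd p*(-2*w1)" "c dvd p*(-2*w2)" "c dvd p*(w1*w2 - t)" "c dvd p*4"
    using c[of 1 3] c[of 2 3] c[of 1 2] c[of 3 3] cof3_block_form[OF det X Y Z]
    by (simp_all add: block_adjugate_nth)
  then show "c dvd 2*p"
  proof (cases "w1 = 1 \<or> w2 = 1")
    case True
    then show ?thesis using \<open>c dvd p*(-2*w1)\<close> \<open>c dvd p*(-2*w2)\<close> by (auto simp: algebra_simps)
  next
    case False
    then have "w1 = 0" "t mod 4 = 2" using w by auto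
    then obtain k where "t = 4*k + 2" by (metis div_mod_decomp_int mult.commute)
    then have "p*(w1*w2 - t) + k*(p*4) = -(2*p)" using \<open>w1 = 0\<close> by (simp add: algebra_simps)
    then show ?thesis using \<open>c dvd p*(w1*w2 - t)\<close> \<open>c dvd p*4\<close> by (metis dvd_add dvd_minus_iff dvd_mult)
  qed
qed

lemma reciprocal_block_form: "reciprocal (block_form a t b X Y Z) = reciprocal_block f11 f12 f22 w1 w2"
  unfolding vec_eq_iff reciprocal_def tern_Omega_block_form
  using cof3_block_form_eq_reciprocal_block p(2) by simp

lemma tern_improperly_primitive_reciprocal_block:
  "tern_improperly_primitive (reciprocal_block f11 f12 f22 w1 w2)"
  unfolding tern_improperly_primitive_def
proof
  let ?F = "reciprocal_block f11 f12 f22 w1 w2"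
  show "tern_tau ?F = 1" unfolding tern_tau_def
  proof (rule Gcd_entries_eqI)
    fix c assume c: "\<And>i j. c dvd ?F $ i $ j"
    have "c dvd w1" "c dvd w2" "c dvd f12" "c dvd 2"
      using c[of 1 3] c[of 2 3] c[of 1 2] c[of 3 3] by (simp_all add: reciprocal_block_nth)
    show "c dvd 1"
    proof (cases "w1 = 1 \<or> w2 = 1")
      case True
      then show ?thesis using \<open>c dvd w1\<close> \<open>c dvd w2\<close> by auto
    next
      case False
      then have "odd f12" using w f(2) by auto presburger
      then obtain k where "f12 = 2*k + 1" by (auto elim: oddE)
      have "c dvd f12 - k*2" using \<open>c dvd f12\<close> \<open>c dvd 2\<close> by simp
      then show ?thesis using \<open>f12 = 2*k + 1\<close> by simp
    qed
  qed auto
  show "tern_sigma ?F = 2" unfolding tern_sigma_def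
  proof (rule Gcd_eqI)
    fix x assume "x \<in> {?F $ i $ i | i. True} \<union> {2 * ?F $ i $ j | i j. i \<noteq> j}"
    then show "2 dvd x"
    proof
      assume "x \<in> {?F $ i $ i | i. True}"
      then obtain i where "x = ?F $ i $ i" by blast
      then show ?thesis using exhaust_3[of i] f(4,5) by (auto simp: reciprocal_block_nth)
    qed auto
  next
    fix c assume "\<And>x. x \<in> {?F $ i $ i | i. True} \<union> {2 * ?F $ i $ j | i j. i \<noteq> j} \<Longrightarrow> c dvd x"
    moreover have "?F $ 3 $ 3 \<in> {?F $ i $ i | i. True} \<union> {2 * ?F $ i $ j | i j. i \<noteq> j}" by blast
    ultimately show "c dvd 2" by (simp add: reciprocal_block_nth)
  qed simp
qed

lemma det_reciprocal_block: "det (reciprocal_block f11 f12 f22 w1 w2) = 2*p"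
proof -
  have "cof3 (block_form a t b X Y Z) = (\<chi> i j. (2*p) * reciprocal_block f11 f12 f22 w1 w2 $ i $ j)"
    unfolding vec_eq_iff using cof3_block_form_eq_reciprocal_block by simp
  then have "(2*p)^3 * det (reciprocal_block f11 f12 f22 w1 w2) = (4*p^2)^2"
    using det_cof3[of "block_form a t b X Y Z"] det_block_form[OF det X Y Z] det_scaled_3 p(2) by simp
  also have "\<dots> = (2*p)^3 * (2*p)" by (simp add: power2_eq_square power3_eq_cube)
  finally show ?thesis using p(2) by simp
qed

end

lemma reduced_form_arithmetic:
  fixes p a t b :: int
  assumes "odd p" "a*b - t^2 = 4*p" "a mod 4 = 0 \<or> a mod 4 = 3" "b mod 4 = 0 \<or> b mod 4 = 3"
  defines "w1 \<equiv> b mod 2" and "w2 \<equiv> a mod 2"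
  shows "2 dvd a*w1 + t*w2 \<and> 2 dvd t*w1 + b*w2 \<and> 4 dvd 4*p + a*w1^2 + 2*t*w1*w2 + b*w2^2
    \<and> 4 dvd b + w1^2 \<and> 4 dvd a + w2^2 \<and> 2 dvd w1*w2 - t \<and> (w1 = 1 \<or> w2 = 1 \<or> t mod 4 = 2)"
proof -
  have "t^2 = a*b - 4*p" using assms(2) by simp
  then have "odd (t^2) \<longleftrightarrow> odd (a*b - 4*p)" by simp
  then have t_odd: "odd t \<longleftrightarrow> odd a \<and> odd b" by simp
  have t_mod_4: "t mod 4 = 2" if ev: "even a" "even b"
  proof -
    have "4 dvd a" "4 dvd b" using ev assms(3,4) by presburger+
    then obtain a' b' where "a = 4*a'" "b = 4*b'" unfolding dvd_def by blast
    moreover obtain k where "t = 2*k" using ev t_odd by blast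
    ultimately have "k^2 = 4*(a'*b') - p" using assms(2) by (simp add: power2_eq_square algebra_simps)
    then have "odd (k^2)" using assms(1) by simp
    then show ?thesis using \<open>t = 2*k\<close> by simp presburger
  qed
  consider "odd a" "odd b" | "odd a" "even b" | "even a" "odd b" | "even a" "even b" by blast
  then show ?thesis
  proof cases
    case 1
    then have "w1 = 1" "w2 = 1" unfolding w1_def w2_def by (simp_all add: odd_iff_mod_2_eq_one)
    moreover have "a mod 4 = 3" "b mod 4 = 3" using 1 assms(3,4) by presburger+
    moreover have "odd t" using 1 t_odd by simp
    ultimately show ?thesis by simp presburger
  next
    case 2
    then have "w1 = 0" "w2 = 1" unfolding w1_def w2_def by (simp_all add: odd_iff_mod_2_eq_one)
    moreover have "a mod 4 = 3" "b mod 4 = 0" using 2 assms(3,4) by presburger+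
    moreover have "even t" using 2 t_odd by simp
    ultimately show ?thesis by simp presburger
  next
    case 3
    then have "w1 = 1" "w2 = 0" unfolding w1_def w2_def by (simp_all add: odd_iff_mod_2_eq_one)
    moreover have "a mod 4 = 0" "b mod 4 = 3" using 3 assms(3,4) by presburger+
    moreover have "even t" using 3 t_odd by simp
    ultimately show ?thesis by simp presburger
  next
    case 4
    then have "w1 = 0" "w2 = 0" unfolding w1_def w2_def by simp_all
    moreover have "a mod 4 = 0" "b mod 4 = 0" using 4 assms(3,4) by presburger+
    moreover have "t mod 4 = 2" using 4 t_mod_4 by simp
    ultimately show ?thesis by simp presburger
  qed
qed

lemma reduced_form_properties:
  fixes p a t b :: int
  assumes p: "prime p" "p > 2" and det: "a*b - t^2 = 4*p"
    and mod_4: "a mod 4 = 0 \<or> a mod 4 = 3" "b mod 4 = 0 \<or> b mod 4 = 3"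
  defines "N \<equiv> reduced_form p a t b"
  shows "symmetric3 N \<and> tern_primitive N \<and> tern_invariants N (2*p) 1
    \<and> properly_represents N (bin_mat a t b)
    \<and> tern_improperly_primitive (reciprocal N) \<and> det (reciprocal N) = 2*p"
proof -
  define w1 w2 where "w1 = b mod 2" and "w2 = a mod 2"
  have "odd p" using p prime_odd_int by blast
  note arith = reduced_form_arithmetic[OF this det mod_4, folded w1_def w2_def]
  then have om: "w1 = 1 \<or> w2 = 1 \<or> t mod 4 = 2" by blast
  define X Y Z where "X = (a*w1 + t*w2) div 2" and "Y = (t*w1 + b*w2) div 2"
    and "Z = (4*p + a*w1^2 + 2*t*w1*w2 + b*w2^2) div 4"
  have X: "2*X = a*w1 + t*w2" and Y: "2*Y = t*w1 + b*w2"
    and Z: "4*Z = 4*p + a*w1^2 + 2*t*w1*w2 + b*w2^2"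
    unfolding X_def Y_def Z_def using arith by simp_all
  obtain k1 k2 where "b + w1^2 = 4*k1" "a + w2^2 = 4*k2" using arith unfolding dvd_def by blast
  moreover obtain f12 where "w1*w2 - t = 2*f12" using arith unfolding dvd_def by blast
  ultimately have f: "2*(2*k1) = b + w1^2" "2*f12 = w1*w2 - t" "2*(2*k2) = a + w2^2"
    "even (2*k1)" "even (2*k2)" by simp_all
  have w: "w1 \<in> {0, 1}" "w2 \<in> {0, 1}" unfolding w1_def w2_def by auto
  have N: "N = block_form a t b X Y Z"
    unfolding N_def reduced_form_def Let_def X_def Y_def Z_def w1_def w2_def ..
  have "even (b + w1^2)" "even (a + w2^2)" using f(1,3) by (metis dvd_triv_left)+
  then have "tern_primitive N" unfolding N by (rule tern_primitive_block_form[OF p det Z w])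
  moreover have "tern_invariants N (2*p) 1"
    unfolding N tern_invariants_def
    using tern_Omega_block_form[OF p det X Y Z f w om] det_block_form[OF det X Y Z]
    by (simp add: power2_eq_square)
  moreover have "reciprocal N = reciprocal_block (2*k1) f12 (2*k2) w1 w2"
    unfolding N by (rule reciprocal_block_form[OF p det X Y Z f w om])
  ultimately show ?thesis
    unfolding N using symmetric3_block_form properly_represents_block_form
      tern_improperly_primitive_reciprocal_block[OF p det X Y Z f w om]
      det_reciprocal_block[OF p det X Y Z f w om] by simp
qed


lemma four_dvd_if_even_odd:
  fixes p a t b :: int
  assumes "a*b - t^2 = 4*p" "even a" "odd b"
  shows "4 dvd a"
proof -
  have "t^2 = a*b - 4*p" using assms(1) by simp
  then have "even (t^2)" using assms(2) by simp
  then obtain k where "t = 2*k" by auto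
  then have "a*b = 4*(k^2 + p)" using assms(1) by (simp add: power2_eq_square algebra_simps)
  then have "4 dvd a*b" by simp
  moreover have "coprime 4 b" using assms(3) coprime_power_left_iff[of 2 2 b] by simp
  ultimately show ?thesis by (simp add: coprime_dvd_mult_left_iff coprime_commute)
qed

lemma mod_4_if_not_in_principal_genus:
  fixes p a t b :: int
  assumes p: "prime p" "p > 2" and pos: "a > 0" "b > 0" and det: "a*b - t^2 = 4*p"
    and prim: "bin_primitive a (2*t) b" and not_principal: "\<not> in_principal_genus p (a, 2*t, b)"
  shows "(a mod 4 = 0 \<or> a mod 4 = 3) \<and> (b mod 4 = 0 \<or> b mod 4 = 3)"
proof -
  have "\<not> (even a \<and> even b)"
  proof
    assume "even a \<and> even b"
    then have "2 dvd Gcd {a, 2*t, b}" by (intro Gcd_greatest) auto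
    then have "(2::int) dvd 1" using prim unfolding bin_primitive_def by (simp only:)
    then show False by simp
  qed
  moreover have "a mod 4 \<noteq> 1"
    using in_principal_genus_if_mod_4_eq_1[OF p pos(1) _ det] not_principal by blast
  moreover have "b mod 4 \<noteq> 1"
  proof
    assume "b mod 4 = 1"
    moreover have "b*a - t^2 = 4*p" using det by (simp add: mult.commute)
    ultimately have "in_principal_genus p (b, 2*t, a)" by (rule in_principal_genus_if_mod_4_eq_1[OF p pos(2)])
    then show False using in_principal_genus_swap not_principal by blast
  qed
  moreover have "4 dvd a" if "even a" "odd b" using four_dvd_if_even_odd[OF det that] .
  moreover have "4 dvd b" if "even b" "odd a"
    using four_dvd_if_even_odd[of b a t p] det that by (simp add: mult.commute)
  ultimately show ?thesis by presburger
qed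

lemma tern_equivalent_if_invariants_represent:
  fixes p a t b :: int and A B :: "int^3^3"
  assumes "p > 0" "a*b - t^2 = 4*p"
    and "symmetric3 A" "tern_invariants A (2*p) 1" "properly_represents A (bin_mat a t b)"
    and "symmetric3 B" "tern_invariants B (2*p) 1" "properly_represents B (bin_mat a t b)"
  shows "tern_equivalent A B"
proof -
  obtain V where "det V = 1" "transpose V ** A ** V = reduced_form p a t b"
    using congruent_to_reduced_form[OF assms(1-5)] by blast
  moreover obtain W where "det W = 1" "transpose W ** B ** W = reduced_form p a t b"
    using congruent_to_reduced_form[OF assms(1,2,6-8)] by blast
  ultimately show ?thesis using tern_equivalent_if_congruent by blast
qed

theorem mainTheorem3:
  fixes p a t b :: int
  assumes "prime p" and "p \<ge> 5"
    and posdef: "a > 0" "a * b - t^2 > 0"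
    and disc: "(2*t)^2 - 4*a*b = -16*p"
    and cases: "(bin_primitive a (2*t) b \<and> \<not> in_principal_genus p (a, 2*t, b))
              \<or> (4 dvd a \<and> 4 dvd (2*t) \<and> 4 dvd b \<and> bin_primitive (a div 4) ((2*t) div 4) (b div 4))"
  shows "(\<exists>A::int^3^3. symmetric3 A \<and> tern_primitive A \<and> tern_invariants A (2*p) 1
            \<and> properly_represents A (bin_mat a t b)
            \<and> tern_improperly_primitive (reciprocal A) \<and> det (reciprocal A) = 2*p)
       \<and> (\<forall>A B::int^3^3.
            symmetric3 A \<and> tern_primitive A \<and> tern_invariants A (2*p) 1
              \<and> properly_represents A (bin_mat a t b) \<and>
            symmetric3 B \<and> tern_primitive B \<and> tern_invariants B (2*p) 1
              \<and> properly_represents B (bin_mat a t b)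
            \<longrightarrow> tern_equivalent A B)"
proof -
  have p: "prime p" "p > 2" and "p > 0" using assms(1,2) by simp_all
  have det: "a*b - t^2 = 4*p" using disc by (simp add: power2_eq_square algebra_simps)
  have "a*b > 0" using posdef(2) zero_le_power2[of t] by linarith
  then have "b > 0" using posdef(1) by (simp add: zero_less_mult_iff)
  then have "a mod 4 = 0 \<or> a mod 4 = 3" "b mod 4 = 0 \<or> b mod 4 = 3"
    using cases mod_4_if_not_in_principal_genus[OF p posdef(1) _ det] by auto
  note exists = reduced_form_properties[OF p det this]
  note unique = tern_equivalent_if_invariants_represent[OF \<open>p > 0\<close> det]
  show ?thesis
    by (rule conjI, use exists in \<open>rule exI\<close>, intro allI impI, elim conjE, (rule unique; assumption))
qed

end
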